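(* Let $p,q,r$ be pairwise distinct primes with $p<q$ and $p<r$. Let $q',r'\in\{1,\dots,p-1\}$ be the inverses of $q,r$ modulo $p$, let $p'_q\in\{1,\dots,q-1\}$ be the inverse of $p$ modulo $q$ and $p'_r\in\{1,\dots,r-1\}$ the inverse of $p$ modulo $r$. Then for every integer $k$, $$F_k-F_{k-q}=\begin{cases}-1,& \text{if } a_k<r' \text{ and } c_k<p'_r,\\ 1,& \text{if } a_k\ge r' \text{ and } c_k\ge p'_r,\\ 0,&\text{otherwise},\end{cases}$$ and $$F_k-F_{k-r}=\begin{cases}-1,& \text{if } a_k<q' \text{ and } b_k<p'_q,\\ 1,& \text{if } a_k\ge q' \text{ and } b_k\ge p'_q,\\ 0,&\text{otherwise}.\end{cases}$$
   Context: For each integer $k$, let $a_k,b_k,c_k$ be the unique integers with $0\le a_k<p$, $0\le b_k<q$, $0\le c_k<r$ and $k\equiv a_kqr+b_krp+c_kpq \pmod{pqr}$, and define $F_k=\frac{a_k}{p}+\frac{b_k}{q}+\frac{c_k}{r}-\frac{k}{pqr}$. *)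

theory Defs
  imports "HOL-Number_Theory.Number_Theory"
begin

definition abc :: "int \<Rightarrow> int \<Rightarrow> int \<Rightarrow> int \<Rightarrow> int \<times> int \<times> int" where
  "abc p q r k = (THE t. case t of (a, b, c) \<Rightarrow>
      0 \<le> a \<and> a < p \<and> 0 \<le> b \<and> b < q \<and> 0 \<le> c \<and> c < r \<and>
      [k = a*q*r + b*r*p + c*p*q] (mod p*q*r))"

definition ak :: "int \<Rightarrow> int \<Rightarrow> int \<Rightarrow> int \<Rightarrow> int" where
  "ak p q r k = fst (abc p q r k)"

definition bk :: "int \<Rightarrow> int \<Rightarrow> int \<Rightarrow> int \<Rightarrow> int" where
  "bk p q r k = fst (snd (abc p q r k))"

definition ck :: "int \<Rightarrow> int \<Rightarrow> int \<Rightarrow> int \<Rightarrow> int" where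
  "ck p q r k = snd (snd (abc p q r k))"

definition F :: "int \<Rightarrow> int \<Rightarrow> int \<Rightarrow> int \<Rightarrow> real" where
  "F p q r k = real_of_int (ak p q r k) / real_of_int p + real_of_int (bk p q r k) / real_of_int q
     + real_of_int (ck p q r k) / real_of_int r - real_of_int k / real_of_int (p*q*r)"

end

theory Submission
  imports Defs
begin

(* By the Chinese remainder
   theorem, k = a q r + b r p + c p q (mod p q r) holds iff each digit is pinned
   down by a single congruence: a q r = k (mod p), b r p = k (mod q) and
   c p q = k (mod r).  Each such "digit" exists and is unique in its range, so
   abc p q r k is the unique triple of digits, and the triple is symmetric under
   exchanging q and r.  Passing from k to k - d changes a digit a by a fixed
   amount s modulo p whenever (q r) s = d (mod p); for d = q this gives
   a_{k-q} = (a_k - r') mod p, b_{k-q} = b_k, c_{k-q} = (c_k - p'_r) mod r.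
   Together with the identity r r' + p p'_r = p r + 1 (r r' + p p'_r - 1 is
   divisible by p and by r and lies strictly between 0 and 2 p r) this evaluates F_k - F_{k-q}.
   The formula for F_k - F_{k-r} is the same statement with q and r swapped. *)

definition digit :: "int \<Rightarrow> int \<Rightarrow> int \<Rightarrow> int \<Rightarrow> bool" where
  "digit p m k a \<longleftrightarrow> 0 \<le> a \<and> a < p \<and> [k = a * m] (mod p)"

lemma digit_exists:
  fixes p m k :: int
  assumes "coprime m p" "0 < p"
  shows "\<exists>a. digit p m k a"
proof -
  obtain s where s: "[m * s = 1] (mod p)" using cong_solve_coprime_int[OF assms(1)] by blast
  have "[(k * s) mod p * m = k * (m * s)] (mod p)"
    by (rule cong_trans[OF cong_scalar_right[OF cong_mod_leftI[OF cong_refl]]]) (simp add: ac_simps)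
  also have "[k * (m * s) = k * 1] (mod p)" using s by (rule cong_scalar_left)
  finally have "digit p m k ((k * s) mod p)"
    unfolding digit_def using assms(2) by (simp add: cong_sym)
  then show ?thesis by blast
qed

lemma digit_unique:
  fixes p m k a a' :: int
  assumes "coprime m p" "digit p m k a" "digit p m k a'"
  shows "a = a'"
proof -
  have "[a * m = a' * m] (mod p)"
    using assms(2,3) unfolding digit_def by (meson cong_sym cong_trans)
  then have "[a = a'] (mod p)" using cong_mult_rcancel[OF assms(1)] by blast
  then show ?thesis using assms(2,3) cong_less_imp_eq_int unfolding digit_def by blast
qed

lemma digit_shift:
  fixes p m k a s d :: int
  assumes "0 < p" "digit p m k a" "[m * s = d] (mod p)"
  shows "digit p m (k - d) ((a - s) mod p)"
proof -
  have "[(a - s) mod p * m = a * m - m * s] (mod p)"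
    by (rule cong_trans[OF cong_scalar_right[OF cong_mod_leftI[OF cong_refl]]])
       (simp add: algebra_simps)
  also have "[a * m - m * s = k - d] (mod p)"
    using assms(2,3) unfolding digit_def by (intro cong_diff) (simp_all add: cong_sym)
  finally show ?thesis unfolding digit_def using assms(1) by (simp add: cong_sym)
qed

lemma mod_shift:
  fixes p a s :: int
  assumes "0 \<le> a" "a < p" "0 \<le> s" "s < p"
  shows "a - (a - s) mod p = s - p * (if a < s then 1 else 0)"
proof (cases "a < s")
  case True
  have "(a - s) mod p = (a - s + p) mod p" by simp
  also have "\<dots> = a - s + p" using True assms by (intro mod_pos_pos_trivial) auto
  finally have "(a - s) mod p = a - s + p" .
  then show ?thesis using True by simp
next
  case False
  then show ?thesis using assms by (simp add: mod_pos_pos_trivial)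
qed

definition digits :: "int \<Rightarrow> int \<Rightarrow> int \<Rightarrow> int \<Rightarrow> int \<times> int \<times> int \<Rightarrow> bool" where
  "digits p q r k t = (case t of (a, b, c) \<Rightarrow>
      0 \<le> a \<and> a < p \<and> 0 \<le> b \<and> b < q \<and> 0 \<le> c \<and> c < r \<and>
      [k = a*q*r + b*r*p + c*p*q] (mod p*q*r))"

lemma sum_cong_first:
  fixes p q r a b c :: int
  shows "[a*q*r + b*r*p + c*p*q = a * (q*r)] (mod p)"
  unfolding cong_iff_dvd_diff by (rule dvdI[of _ _ "b*r + c*q"]) (simp add: algebra_simps)

lemma digits_iff:
  fixes p q r k a b c :: int
  assumes "coprime p q" "coprime p r" "coprime q r"
  shows "digits p q r k (a, b, c) \<longleftrightarrow>
           digit p (q*r) k a \<and> digit q (r*p) k b \<and> digit r (p*q) k c"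
proof -
  let ?S = "a*q*r + b*r*p + c*p*q"
  have mp: "[?S = a * (q*r)] (mod p)" by (rule sum_cong_first)
  have mq: "[?S = b * (r*p)] (mod q)"
    using sum_cong_first[where p = q and a = b and q = r and r = p and b = c and c = a] by (simp add: ac_simps)
  have mr: "[?S = c * (p*q)] (mod r)"
    using sum_cong_first[where p = r and a = c and q = p and r = q and b = a and c = b] by (simp add: ac_simps)
  have "[k = ?S] (mod p*q*r) \<longleftrightarrow>
          [k = ?S] (mod p) \<and> [k = ?S] (mod q) \<and> [k = ?S] (mod r)"
  proof
    assume "[k = ?S] (mod p*q*r)"
    then show "[k = ?S] (mod p) \<and> [k = ?S] (mod q) \<and> [k = ?S] (mod r)"
      by (meson cong_dvd_modulus dvd_triv_left dvd_triv_right dvd_mult_left)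
  next
    assume "[k = ?S] (mod p) \<and> [k = ?S] (mod q) \<and> [k = ?S] (mod r)"
    then show "[k = ?S] (mod p*q*r)"
      using assms by (metis coprime_cong_mult coprime_mult_left_iff)
  qed
  also have "\<dots> \<longleftrightarrow> [k = a*(q*r)] (mod p) \<and> [k = b*(r*p)] (mod q) \<and> [k = c*(p*q)] (mod r)"
    using mp mq mr by (meson cong_sym cong_trans)
  finally show ?thesis unfolding digits_def digit_def by auto
qed

lemma abc_eqI:
  fixes p q r k :: int
  assumes "coprime p q" "coprime p r" "coprime q r" "digits p q r k t"
  shows "abc p q r k = t"
proof -
  have "abc p q r k = (THE t. digits p q r k t)" unfolding abc_def digits_def by simp
  also have "\<dots> = t"
  proof (rule the_equality)
    fix t' assume "digits p q r k t'"
    have cop: "coprime (q*r) p" "coprime (r*p) q" "coprime (p*q) r"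
      using assms(1-3) by (simp_all add: coprime_commute coprime_mult_left_iff)
    from \<open>digits p q r k t'\<close> assms show "t' = t"
      by (cases t; cases t') (auto simp: digits_iff intro: digit_unique[OF cop(1)]
          digit_unique[OF cop(2)] digit_unique[OF cop(3)])
  qed fact
  finally show ?thesis .
qed

lemma abc_digits:
  fixes p q r k :: int
  assumes "coprime p q" "coprime p r" "coprime q r" "0 < p" "0 < q" "0 < r"
  shows "digit p (q*r) k (ak p q r k)" "digit q (r*p) k (bk p q r k)"
    "digit r (p*q) k (ck p q r k)"
proof -
  have cop: "coprime (q*r) p" "coprime (r*p) q" "coprime (p*q) r"
    using assms(1-3) by (simp_all add: coprime_commute coprime_mult_left_iff)
  obtain a b c where "digit p (q*r) k a" "digit q (r*p) k b" "digit r (p*q) k c"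
    using digit_exists cop assms(4-6) by metis
  then have "abc p q r k = (a, b, c)" using abc_eqI assms(1-3) digits_iff by blast
  with \<open>digit p (q*r) k a\<close> \<open>digit q (r*p) k b\<close> \<open>digit r (p*q) k c\<close>
  show "digit p (q*r) k (ak p q r k)" "digit q (r*p) k (bk p q r k)"
    "digit r (p*q) k (ck p q r k)" unfolding ak_def bk_def ck_def by simp_all
qed

lemma abc_swap:
  fixes p q r k :: int
  assumes "coprime p q" "coprime p r" "coprime q r" "0 < p" "0 < q" "0 < r"
  shows "ak p r q k = ak p q r k" "bk p r q k = ck p q r k" "ck p r q k = bk p q r k"
    "F p r q k = F p q r k"
proof -
  have "digits p r q k (ak p q r k, ck p q r k, bk p q r k)"
    using abc_digits[OF assms] assms(1-3)
    by (simp add: digits_iff coprime_commute ac_simps)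
  then have "abc p r q k = (ak p q r k, ck p q r k, bk p q r k)"
    using assms(1-3) by (intro abc_eqI) (simp_all add: coprime_commute)
  then show "ak p r q k = ak p q r k" "bk p r q k = ck p q r k" "ck p r q k = bk p q r k"
    unfolding ak_def bk_def ck_def by simp_all
  then show "F p r q k = F p q r k" unfolding F_def by (simp add: ac_simps)
qed

lemma inverse_sum:
  fixes p r r' pr' :: int
  assumes "coprime p r" "r' \<in> {1..p-1}" "[r * r' = 1] (mod p)"
    "pr' \<in> {1..r-1}" "[p * pr' = 1] (mod r)"
  shows "r * r' + p * pr' = p * r + 1"
proof -
  define X where "X = r * r' + p * pr' - 1"
  have "p dvd X" "r dvd X" using assms(3,5) unfolding X_def cong_iff_dvd_diff
    by (metis add_diff_eq diff_add_eq dvd_add dvd_triv_left)+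
  then obtain m where m: "X = p * r * m" using divides_mult assms(1) by blast
  have bnd: "2 \<le> p" "2 \<le> r" "r \<le> r * r'" "p \<le> p * pr'" using assms(2,4) by simp_all
  moreover have "r * r' \<le> p * r - r" "p * pr' \<le> p * r - p"
    using mult_left_mono[of r' "p - 1" r] mult_left_mono[of pr' "r - 1" p] assms(2,4)
    by (simp_all add: algebra_simps)
  ultimately have "0 < p * r * m \<and> p * r * m < p * r * 2" unfolding m[symmetric] X_def by linarith
  moreover have "0 < p * r" using bnd by simp
  ultimately have "0 < m \<and> m < 2" by (meson mult_less_cancel_left_pos zero_less_mult_pos)
  then have "m = 1" by linarith
  then show ?thesis using m unfolding X_def by simp
qed

lemma abc_minus_q:
  fixes p q r r' pr' k :: int
  assumes "coprime p q" "coprime p r" "coprime q r" "0 < p" "0 < q" "0 < r"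
    and "[r * r' = 1] (mod p)" "[p * pr' = 1] (mod r)"
  shows "abc p q r (k - q) =
           ((ak p q r k - r') mod p, bk p q r k, (ck p q r k - pr') mod r)"
proof -
  note d = abc_digits[OF assms(1-6), of k]
  have "[q * r * r' = q] (mod p)" using cong_scalar_left[OF assms(7), of q] by (simp add: ac_simps)
  then have a: "digit p (q*r) (k - q) ((ak p q r k - r') mod p)"
    using digit_shift[OF assms(4) d(1)] by blast
  have "[r * p * 0 = q] (mod q)" by (simp add: cong_def)
  then have "digit q (r*p) (k - q) ((bk p q r k - 0) mod q)"
    using digit_shift[OF assms(5) d(2)] by blast
  then have b: "digit q (r*p) (k - q) (bk p q r k)"
    using d(2) unfolding digit_def by (simp add: mod_pos_pos_trivial)
  have "[p * q * pr' = q] (mod r)" using cong_scalar_left[OF assms(8), of q] by (simp add: ac_simps)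
  then have c: "digit r (p*q) (k - q) ((ck p q r k - pr') mod r)"
    using digit_shift[OF assms(6) d(3)] by blast
  show ?thesis by (intro abc_eqI[OF assms(1-3)]) (simp add: digits_iff[OF assms(1-3)] a b c)
qed

lemma F_minus_q:
  fixes p q r r' pr' k :: int
  assumes cop: "coprime p q" "coprime p r" "coprime q r" and pos: "0 < p" "0 < q" "0 < r"
    and inv: "r' \<in> {1..p-1}" "[r * r' = 1] (mod p)" "pr' \<in> {1..r-1}" "[p * pr' = 1] (mod r)"
  shows "F p q r k - F p q r (k - q) =
           (if ak p q r k < r' \<and> ck p q r k < pr' then -1
            else if ak p q r k \<ge> r' \<and> ck p q r k \<ge> pr' then 1 else 0)"
proof -
  define a c where "a = ak p q r k" and "c = ck p q r k"
  define ea ec :: int where "ea = (if a < r' then 1 else 0)" and "ec = (if c < pr' then 1 else 0)"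
  have rng: "0 \<le> a" "a < p" "0 \<le> c" "c < r"
    using abc_digits[OF cop pos, of k] unfolding a_def c_def digit_def by auto
  have da: "a - (a - r') mod p = r' - p * ea"
    unfolding ea_def using rng inv(1) by (intro mod_shift) auto
  have dc: "c - (c - pr') mod r = pr' - r * ec"
    unfolding ec_def using rng inv(3) by (intro mod_shift) auto
  have key: "real_of_int r * r' + real_of_int p * pr' = real_of_int p * r + 1"
    using arg_cong[OF inverse_sum[OF cop(2) inv], of real_of_int] by simp
  have "F p q r k - F p q r (k - q)
        = real_of_int (a - (a - r') mod p) / p + real_of_int (c - (c - pr') mod r) / r
          - real_of_int q / real_of_int (p*q*r)"
    using abc_minus_q[OF cop pos inv(2,4), of k] pos
    unfolding F_def a_def c_def ak_def bk_def ck_def by (simp add: field_simps)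
  also have "\<dots> = (real_of_int r * r' + real_of_int p * pr' - 1) / (real_of_int p * r) - ea - ec"
    unfolding da dc using pos by (simp add: field_simps)
  also have "\<dots> = 1 - ea - ec" unfolding key using pos by simp
  finally show ?thesis unfolding ea_def ec_def a_def c_def by auto
qed

theorem lemma2:
  fixes p q r q' r' pq' pr' k :: int
  assumes "prime p" "prime q" "prime r"
    and "p \<noteq> q" "p \<noteq> r" "q \<noteq> r"
    and "p < q" "p < r"
    and "q' \<in> {1..p-1}" "[q * q' = 1] (mod p)"
    and "r' \<in> {1..p-1}" "[r * r' = 1] (mod p)"
    and "pq' \<in> {1..q-1}" "[p * pq' = 1] (mod q)"
    and "pr' \<in> {1..r-1}" "[p * pr' = 1] (mod r)"
  shows "(F p q r k - F p q r (k - q) =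
           (if ak p q r k < r' \<and> ck p q r k < pr' then -1
            else if ak p q r k \<ge> r' \<and> ck p q r k \<ge> pr' then 1 else 0)) \<and>
         (F p q r k - F p q r (k - r) =
           (if ak p q r k < q' \<and> bk p q r k < pq' then -1
            else if ak p q r k \<ge> q' \<and> bk p q r k \<ge> pq' then 1 else 0))"
proof -
  have cop: "coprime p q" "coprime p r" "coprime q r"
    using assms(1-6) by (simp_all add: primes_coprime)
  have pos: "0 < p" "0 < q" "0 < r" using assms(1-3) by (simp_all add: prime_gt_0_int)
  have shift_q: "F p q r k - F p q r (k - q) =
           (if ak p q r k < r' \<and> ck p q r k < pr' then -1
            else if ak p q r k \<ge> r' \<and> ck p q r k \<ge> pr' then 1 else 0)"
    by (rule F_minus_q[OF cop pos assms(11,12,15,16)])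
  have "F p r q k - F p r q (k - r) =
           (if ak p r q k < q' \<and> ck p r q k < pq' then -1
            else if ak p r q k \<ge> q' \<and> ck p r q k \<ge> pq' then 1 else 0)"
    using cop pos assms(9,10,13,14) by (intro F_minus_q) (simp_all add: coprime_commute)
  then have shift_r: "F p q r k - F p q r (k - r) =
           (if ak p q r k < q' \<and> bk p q r k < pq' then -1
            else if ak p q r k \<ge> q' \<and> bk p q r k \<ge> pq' then 1 else 0)"
    unfolding abc_swap[OF cop pos] .
  show ?thesis using shift_q shift_r by blast
qed

end
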